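(* In a game with incomplete information as described in the context, suppose Assumptions (I) and (P') hold. If two mixed strategy profiles $f$ and $g$ are universally distribution equivalent, then they are universally payoff equivalent, i.e. $U_i^E(f)=U_i^E(g)$ for every $i\in I$ and every $E\in\mathcal F_i$.
   Context: Game with incomplete information: players $I=\{1,\dots,n\}$. Each player $i$ has an action space $A_i$, a compact metric space; $A=\prod_{i\in I}A_i$ with Borel $\sigma$-algebra $\mathcal B(A)$. Each player $i$ has an information space $(T_i,\mathcal T_i,\lambda_i)$, an atomless probability space with $\lambda_i$ complete and countably additive; $T=\prod_i T_i$, $\mathcal T=\bigotimes_i\mathcal T_i$, and $\lambda$ is a probability measure on $(T,\mathcal T)$ whose marginal on $T_i$ is $\lambda_i$. For each $i$, $\mathcal F_i\subseteq\mathcal T_i$ is a sub-$\sigma$-algebra. Player $i$ has a payoff function $u_i:A\times T_i\to\mathbb R$. $\mathcal M(A_i)$ denotes the space of Borel probability measures on $A_i$ with the topology of weak convergence. A mixed strategy of $i$ is a $\mathcal T_i$-measurable map $f_i:T_i\to\mathcal M(A_i)$ (write $f_i(t_i,\cdot)$ for the measure); a pure strategy is a $\mathcal T_i$-measurable map $f_i:T_i\to A_i$, identified with $t_i\mapsto\delta_{f_i(t_i)}$. For a strategy profile $f=(f_1,\dots,f_n)$ and $E\in\mathcal T_i$, $U_i^E(f)=\int_{E\times\prod_{j\ne i}T_j}\int_A u_i(a_1,\dots,a_n,t_i)\prod_{j\in I}f_j(t_j,\mathrm d a_j)\,\mathrm d\lambda(t)$. Assumption (I): $\lambda=\bigotimes_{i\in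 I}\lambda_i$. Assumption (P'): for each $i$, $\mathcal F_i$ is countably generated; $u_i$ is $\mathcal B(A)\otimes\mathcal F_i$-measurable; $u_i(\cdot,t_i)$ is continuous on $A$ for every $t_i$; and there is a real-valued function $h_i$ integrable on $(T_i,\mathcal F_i,\lambda_i)$ with $|u_i|\le h_i$ on $A\times T_i$. Mixed strategy profiles $f,g$ are universally distribution equivalent if for every $i\in I$ and every $E\in\mathcal F_i$, $\int_E f_i(t_i,\cdot)\,\mathrm d\lambda_i(t_i)=\int_E g_i(t_i,\cdot)\,\mathrm d\lambda_i(t_i)$ as measures on $A_i$. *)

theory Defs
  imports "HOL-Probability.Probability"
begin

definition atomless :: "'a measure \<Rightarrow> bool" where
  "atomless M \<longleftrightarrow> (\<forall>S\<in>sets M. 0 < emeasure M S \<longrightarrow>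
      (\<exists>B\<in>sets M. B \<subseteq> S \<and> 0 < emeasure M B \<and> emeasure M B < emeasure M S))"

definition countably_generated :: "'a measure \<Rightarrow> bool" where
  "countably_generated M \<longleftrightarrow> (\<exists>C. countable C \<and> C \<subseteq> Pow (space M) \<and>
      sets M = sigma_sets (space M) C)"

definition act_space :: "'a::metric_space set \<Rightarrow> 'a measure" where
  "act_space S = restrict_space borel S"

definition payoff ::
  "('i::finite \<Rightarrow> 't) measure \<Rightarrow> ('i \<Rightarrow> ('i \<Rightarrow> 'a) \<Rightarrow> 't \<Rightarrow> real) \<Rightarrow>
   ('i \<Rightarrow> 't \<Rightarrow> 'a measure) \<Rightarrow> 'i \<Rightarrow> 't set \<Rightarrow> real" where
  "payoff lam u f i E =
     (LINT t : {t \<in> space lam. t i \<in> E} | lam.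
        (\<integral>a. u i a (t i) \<partial>(PiM UNIV (\<lambda>j. f j (t j)))))"

definition univ_dist_equiv ::
  "('i \<Rightarrow> 't measure) \<Rightarrow> ('i \<Rightarrow> 't measure) \<Rightarrow> ('i \<Rightarrow> 'a measure) \<Rightarrow>
   ('i \<Rightarrow> 't \<Rightarrow> 'a measure) \<Rightarrow> ('i \<Rightarrow> 't \<Rightarrow> 'a measure) \<Rightarrow> bool" where
  "univ_dist_equiv Tm Fm Am f g \<longleftrightarrow>
     (\<forall>i. \<forall>E\<in>sets (Fm i). \<forall>B\<in>sets (Am i).
        (\<integral>\<^sup>+ t. indicator E t * emeasure (f i t) B \<partial>Tm i) =
        (\<integral>\<^sup>+ t. indicator E t * emeasure (g i t) B \<partial>Tm i))"

end

theory Submission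
  imports Defs
begin

(* The payoff U_i^E(f) is the integral of (a, s) |-> 1_E(s) u_i(a, s), a B(A) x F_i-measurable
   function dominated by h_i(s), against the joint law of the action profile and the type of
   player i, that type being observed only through F_i.  Because types are independent, this law
   gives a rectangle (prod_j B_j) x F the mass prod_j int_{F_j} f_j(t_j, B_j) d lambda_j, where
   F_i = F and F_j = T_j for j ~= i; these are exactly the quantities that universal distribution
   equivalence fixes.  Such rectangles form an intersection-stable generator of B(A) x F_i, so f and
   g induce the same law and therefore the same payoffs. *)

context
  fixes M :: "'a measure" and N :: "'b measure" and K :: "'a \<Rightarrow> 'b measure"
  assumes K: "K \<in> M \<rightarrow>\<^sub>M subprob_algebra N" and M: "space M \<noteq> {}"
begin

lemma sets_bind_kernel: "sets (M \<bind> K) = sets N"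
  by (rule sets_bind[OF sets_kernel[OF K] M])

lemma borel_measurable_bind_kernel_iff:
  "f \<in> borel_measurable (M \<bind> K) \<longleftrightarrow> f \<in> borel_measurable N"
  using sets_bind_kernel by (simp cong: measurable_cong_sets)

lemma AE_integrable_bind:
  fixes f :: "'b \<Rightarrow> 'c::{banach, second_countable_topology}"
  assumes f: "integrable (M \<bind> K) f"
  shows "AE x in M. integrable (K x) f"
proof -
  have [measurable]: "f \<in> borel_measurable N"
    using borel_measurable_integrable[OF f] by (simp add: borel_measurable_bind_kernel_iff)
  have "(\<integral>\<^sup>+x. \<integral>\<^sup>+y. norm (f y) \<partial>K x \<partial>M) \<noteq> \<infinity>"
    using f by (simp add: integrable_iff_bounded nn_integral_bind[OF _ K] less_top)
  then have "AE x in M. (\<integral>\<^sup>+y. norm (f y) \<partial>K x) \<noteq> \<infinity>"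
    by (intro nn_integral_PInf_AE) (use K in measurable)
  moreover have "AE x in M. (\<integral>\<^sup>+y. norm (f y) \<partial>K x) \<noteq> \<infinity> \<longrightarrow> integrable (K x) f"
  proof (intro AE_I2 impI)
    fix x assume "x \<in> space M" and fin: "(\<integral>\<^sup>+y. norm (f y) \<partial>K x) \<noteq> \<infinity>"
    then have "f \<in> borel_measurable (K x)"
      using sets_kernel[OF K] by (simp cong: measurable_cong_sets)
    with fin show "integrable (K x) f" by (simp add: integrable_iff_bounded less_top)
  qed
  ultimately show ?thesis by (rule AE_mp)
qed

lemma has_bochner_integral_bind_nonneg:
  fixes f :: "'b \<Rightarrow> real"
  assumes f: "integrable (M \<bind> K) f" and nonneg: "\<And>y. y \<in> space N \<Longrightarrow> 0 \<le> f y"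
  shows "has_bochner_integral M (\<lambda>x. \<integral>y. f y \<partial>K x) (\<integral>y. f y \<partial>(M \<bind> K))"
proof (rule has_bochner_integral_nn_integral)
  have space_K: "space (K x) = space N" if "x \<in> space M" for x
    using sets_eq_imp_space_eq[OF sets_kernel[OF K that]] .
  have [measurable]: "f \<in> borel_measurable N"
    using borel_measurable_integrable[OF f] by (simp add: borel_measurable_bind_kernel_iff)
  show "(\<lambda>x. \<integral>y. f y \<partial>K x) \<in> borel_measurable M"
    by (use K in measurable)
  show "AE x in M. 0 \<le> (\<integral>y. f y \<partial>K x)"
    using space_K nonneg by (auto intro!: AE_I2 Bochner_Integration.integral_nonneg)
  show "0 \<le> (\<integral>y. f y \<partial>(M \<bind> K))"
    using sets_eq_imp_space_eq[OF sets_bind_kernel] nonneg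
    by (intro Bochner_Integration.integral_nonneg) auto
  have "(\<integral>\<^sup>+x. ennreal (\<integral>y. f y \<partial>K x) \<partial>M) = (\<integral>\<^sup>+x. \<integral>\<^sup>+y. f y \<partial>K x \<partial>M)"
  proof (rule nn_integral_cong_AE)
    show "AE x in M. ennreal (\<integral>y. f y \<partial>K x) = (\<integral>\<^sup>+y. f y \<partial>K x)"
      using AE_integrable_bind[OF f]
    proof (rule AE_mp, intro AE_I2 impI)
      fix x assume "x \<in> space M" "integrable (K x) f"
      then show "ennreal (\<integral>y. f y \<partial>K x) = (\<integral>\<^sup>+y. f y \<partial>K x)"
        using space_K nonneg by (intro nn_integral_eq_integral[symmetric] AE_I2) auto
    qed
  qed
  also have "\<dots> = (\<integral>\<^sup>+y. f y \<partial>(M \<bind> K))"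
    by (rule nn_integral_bind[symmetric, OF _ K]) measurable
  also have "\<dots> = ennreal (\<integral>y. f y \<partial>(M \<bind> K))"
    using f sets_eq_imp_space_eq[OF sets_bind_kernel] nonneg
    by (intro nn_integral_eq_integral AE_I2) auto
  finally show "(\<integral>\<^sup>+x. ennreal (\<integral>y. f y \<partial>K x) \<partial>M) = ennreal (\<integral>y. f y \<partial>(M \<bind> K))" .
qed

lemma integral_bind:
  fixes f :: "'b \<Rightarrow> real"
  assumes f: "integrable (M \<bind> K) f"
  shows "(\<integral>y. f y \<partial>(M \<bind> K)) = (\<integral>x. \<integral>y. f y \<partial>K x \<partial>M)"
proof -
  let ?pos = "\<lambda>y. max 0 (f y)" and ?neg = "\<lambda>y. max 0 (- f y)"
  have pos_neg: "?pos y - ?neg y = f y" for y by auto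
  have [measurable]: "f \<in> borel_measurable N"
    using borel_measurable_integrable[OF f] by (simp add: borel_measurable_bind_kernel_iff)
  have "(\<integral>x. \<integral>y. f y \<partial>K x \<partial>M) = (\<integral>x. (\<integral>y. ?pos y \<partial>K x) - (\<integral>y. ?neg y \<partial>K x) \<partial>M)"
  proof (rule integral_cong_AE)
    show "AE x in M. (\<integral>y. f y \<partial>K x) = (\<integral>y. ?pos y \<partial>K x) - (\<integral>y. ?neg y \<partial>K x)"
      using AE_integrable_bind[OF f]
      by (rule AE_mp) (auto intro!: AE_I2 simp: pos_neg simp flip: Bochner_Integration.integral_diff)
  qed (use K in measurable)
  also have "\<dots> = (\<integral>y. ?pos y \<partial>(M \<bind> K)) - (\<integral>y. ?neg y \<partial>(M \<bind> K))"
    using f by (intro has_bochner_integral_integral_eq has_bochner_integral_diff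
        has_bochner_integral_bind_nonneg) auto
  also have "\<dots> = (\<integral>y. f y \<partial>(M \<bind> K))"
    using f by (auto simp: pos_neg simp flip: Bochner_Integration.integral_diff)
  finally show ?thesis ..
qed

lemma integrable_bind_bound:
  fixes f :: "'b \<Rightarrow> 'c::{banach, second_countable_topology}"
  assumes f: "f \<in> borel_measurable N" and G: "integrable M G"
    and bound: "\<And>x. x \<in> space M \<Longrightarrow> (\<integral>\<^sup>+y. norm (f y) \<partial>K x) \<le> ennreal (G x)"
  shows "integrable (M \<bind> K) f"
proof (subst integrable_iff_bounded, intro conjI)
  show "f \<in> borel_measurable (M \<bind> K)"
    using f by (simp add: borel_measurable_bind_kernel_iff)
  have "(\<integral>\<^sup>+y. norm (f y) \<partial>(M \<bind> K)) = (\<integral>\<^sup>+x. \<integral>\<^sup>+y. norm (f y) \<partial>K x \<partial>M)"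
    using f by (intro nn_integral_bind[OF _ K]) measurable
  also have "\<dots> \<le> (\<integral>\<^sup>+x. norm (G x) \<partial>M)"
    using bound by (intro nn_integral_mono) (force intro: order_trans ennreal_leI)
  also have "\<dots> < \<infinity>"
    using G by (simp add: integrable_iff_bounded)
  finally show "(\<integral>\<^sup>+y. norm (f y) \<partial>(M \<bind> K)) < \<infinity>" .
qed

end

lemma measure_eqI_PiM_pair:
  fixes M :: "'i \<Rightarrow> 'a measure" and N :: "'b measure"
  assumes sets1: "sets J1 = sets (PiM I M \<Otimes>\<^sub>M N)"
    and sets2: "sets J2 = sets (PiM I M \<Otimes>\<^sub>M N)"
    and fin: "finite_measure J1"
    and eq: "\<And>X F. X \<in> prod_algebra I M \<Longrightarrow> F \<in> sets N \<Longrightarrow>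
      emeasure J1 (X \<times> F) = emeasure J2 (X \<times> F)"
  shows "J1 = J2"
proof -
  let ?\<Omega> = "space (PiM I M) \<times> space N"
  let ?G = "{X \<times> F | X F. X \<in> prod_algebra I M \<and> F \<in> sets N}"
  have space_prod_algebra: "space (PiM I M) \<in> prod_algebra I M"
    using space_in_prod_algebra by (simp add: space_PiM)
  have G_space: "?G \<subseteq> Pow ?\<Omega>"
    using prod_algebra_sets_into_space[of I M] sets.sets_into_space[of _ N]
    by (fastforce simp: space_PiM)
  have "sets (PiM I M \<Otimes>\<^sub>M N) = sigma_sets ?\<Omega> ?G"
  proof -
    have "sets (PiM I M \<Otimes>\<^sub>M N) = sets (sigma ?\<Omega> ?G)"
      using prod_algebra_sets_into_space[of I M] space_prod_algebra
      by (intro sets_pair_eq[where Ca="{space (PiM I M)}" and Cb="{space N}"])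
         (auto simp: sets_PiM sets.sigma_sets_eq space_PiM dest: sets.sets_into_space)
    then show ?thesis using G_space by (simp add: sets_measure_of)
  qed
  moreover have "Int_stable ?G"
  proof (rule Int_stableI)
    fix a b assume "a \<in> ?G" "b \<in> ?G"
    then obtain X1 F1 X2 F2 where "a = X1 \<times> F1" "b = X2 \<times> F2"
      "X1 \<in> prod_algebra I M" "X2 \<in> prod_algebra I M" "F1 \<in> sets N" "F2 \<in> sets N" by blast
    moreover have "X1 \<inter> X2 \<in> prod_algebra I M"
      using Int_stable_prod_algebra calculation unfolding Int_stable_def by blast
    ultimately show "a \<inter> b \<in> ?G" by (auto simp: Times_Int_Times)
  qed
  ultimately show ?thesis
    using sets1 sets2 space_prod_algebra finite_measure.emeasure_finite[OF fin]
    by (intro measure_eqI_generator_eq[OF _ G_space, where A="\<lambda>_. ?\<Omega>"]) (auto intro: eq)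
qed

lemma measurable_PiM_prob_kernel:
  fixes K :: "'i::finite \<Rightarrow> 't \<Rightarrow> 'a measure"
  assumes K: "\<And>j. K j \<in> M j \<rightarrow>\<^sub>M prob_algebra (N j)"
  shows "(\<lambda>x. PiM UNIV (\<lambda>j. K j (x j))) \<in> PiM UNIV M \<rightarrow>\<^sub>M prob_algebra (PiM UNIV N)"
proof -
  have K_x: "sets (K j (x j)) = sets (N j) \<and> prob_space (K j (x j))"
    if "x \<in> space (PiM UNIV M)" for x j
    using measurable_space[OF K, of "x j" j] that by (auto simp: space_PiM space_prob_algebra)
  show ?thesis
  proof (rule measurable_prob_algebra_generated[OF sets_PiM Int_stable_prod_algebra
        prod_algebra_sets_into_space])
    fix x assume "x \<in> space (PiM UNIV M)"
    with K_x show "prob_space (PiM UNIV (\<lambda>j. K j (x j)))"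
      by (blast intro: prob_space_PiM)
    from \<open>x \<in> space (PiM UNIV M)\<close> K_x
    show "sets (PiM UNIV (\<lambda>j. K j (x j))) = sets (PiM UNIV N)"
      by (intro sets_PiM_cong) auto
  next
    fix X assume "X \<in> prod_algebra UNIV N"
    then obtain B where X: "X = PiE UNIV B" and "B \<in> (\<Pi> j\<in>UNIV. sets (N j))"
      by (rule prod_algebraE_all)
    then have B: "B j \<in> sets (N j)" for j by auto
    have "(\<lambda>x. \<Prod>j\<in>UNIV. emeasure (K j (x j)) (B j)) \<in> borel_measurable (PiM UNIV M)"
      using measurable_prob_algebraD[OF K] B by measurable
    moreover have "(\<Prod>j\<in>UNIV. emeasure (K j (x j)) (B j)) = emeasure (PiM UNIV (\<lambda>j. K j (x j))) X"
      if "x \<in> space (PiM UNIV M)" for x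
    proof -
      interpret product_prob_space "\<lambda>j. K j (x j)"
        using K_x[OF that] by (intro product_prob_spaceI) blast
      show ?thesis
        unfolding X using B K_x[OF that] by (subst emeasure_PiM) auto
    qed
    ultimately show "(\<lambda>x. emeasure (PiM UNIV (\<lambda>j. K j (x j))) X) \<in> borel_measurable (PiM UNIV M)"
      by (simp cong: measurable_cong)
  qed
qed

lemma measurable_into_subalgebra:
  assumes "subalgebra M N" and "f \<in> X \<rightarrow>\<^sub>M M"
  shows "f \<in> X \<rightarrow>\<^sub>M N"
  using assms unfolding measurable_def subalgebra_def by auto

definition action_type_kernel ::
  "('i::finite \<Rightarrow> 'a measure) \<Rightarrow> 't measure \<Rightarrow> ('i \<Rightarrow> 't \<Rightarrow> 'a measure) \<Rightarrow> 'i \<Rightarrow>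
   ('i \<Rightarrow> 't) \<Rightarrow> (('i \<Rightarrow> 'a) \<times> 't) measure" where
  "action_type_kernel AM F f i t = distr (PiM UNIV (\<lambda>j. f j (t j))) (PiM UNIV AM \<Otimes>\<^sub>M F) (\<lambda>a. (a, t i))"

definition action_type_distr ::
  "('i::finite \<Rightarrow> 't measure) \<Rightarrow> ('i \<Rightarrow> 'a measure) \<Rightarrow> 't measure \<Rightarrow>
   ('i \<Rightarrow> 't \<Rightarrow> 'a measure) \<Rightarrow> 'i \<Rightarrow> (('i \<Rightarrow> 'a) \<times> 't) measure" where
  "action_type_distr Tm AM F f i = PiM UNIV Tm \<bind> action_type_kernel AM F f i"

context
  fixes Tm Fm :: "'i::finite \<Rightarrow> 't measure" and AM :: "'i \<Rightarrow> 'a measure"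
  assumes T_prob: "\<And>i. prob_space (Tm i)" and F_sub: "\<And>i. subalgebra (Tm i) (Fm i)"
begin

lemma space_PiM_types_nonempty: "space (PiM UNIV Tm) \<noteq> {}"
  by (rule prob_space.not_empty, rule prob_space_PiM) (rule T_prob)

lemma measurable_type_component: "(\<lambda>t. t i) \<in> PiM UNIV Tm \<rightarrow>\<^sub>M Fm i"
  by (rule measurable_into_subalgebra[OF F_sub]) simp

context
  fixes f :: "'i \<Rightarrow> 't \<Rightarrow> 'a measure"
  assumes f: "\<And>j. f j \<in> Tm j \<rightarrow>\<^sub>M prob_algebra (AM j)"
begin

lemma measurable_Pair_type:
  assumes t: "t \<in> space (PiM UNIV Tm)"
  shows "(\<lambda>a. (a, t i)) \<in> PiM UNIV (\<lambda>j. f j (t j)) \<rightarrow>\<^sub>M PiM UNIV AM \<Otimes>\<^sub>M Fm i"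
proof -
  have "sets (PiM UNIV (\<lambda>j. f j (t j))) = sets (PiM UNIV AM)"
    using measurable_space[OF measurable_PiM_prob_kernel[OF f] t] by (simp add: space_prob_algebra)
  then show ?thesis
    using measurable_space[OF measurable_type_component t] by (simp cong: measurable_cong_sets)
qed

lemma measurable_action_type_kernel:
  "action_type_kernel AM (Fm i) f i \<in> PiM UNIV Tm \<rightarrow>\<^sub>M prob_algebra (PiM UNIV AM \<Otimes>\<^sub>M Fm i)"
  unfolding action_type_kernel_def
proof (rule measurable_distr_prob_space2[OF measurable_PiM_prob_kernel[OF f]])
  note measurable_type_component[measurable]
  show "(\<lambda>(t, a). (a, t i)) \<in> PiM UNIV Tm \<Otimes>\<^sub>M PiM UNIV AM \<rightarrow>\<^sub>M PiM UNIV AM \<Otimes>\<^sub>M Fm i"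
    by measurable
qed

lemma subprob_kernel_action_type_kernel:
  "action_type_kernel AM (Fm i) f i \<in> PiM UNIV Tm \<rightarrow>\<^sub>M subprob_algebra (PiM UNIV AM \<Otimes>\<^sub>M Fm i)"
  by (rule measurable_prob_algebraD[OF measurable_action_type_kernel])

lemma nn_integral_action_type_kernel:
  assumes t: "t \<in> space (PiM UNIV Tm)" and \<rho>: "\<rho> \<in> borel_measurable (PiM UNIV AM \<Otimes>\<^sub>M Fm i)"
  shows "(\<integral>\<^sup>+z. \<rho> z \<partial>action_type_kernel AM (Fm i) f i t)
    = (\<integral>\<^sup>+a. \<rho> (a, t i) \<partial>PiM UNIV (\<lambda>j. f j (t j)))"
  unfolding action_type_kernel_def by (rule nn_integral_distr[OF measurable_Pair_type[OF t]]) (simp add: \<rho>)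

lemma integral_action_type_kernel:
  fixes \<psi> :: "('i \<Rightarrow> 'a) \<times> 't \<Rightarrow> real"
  assumes t: "t \<in> space (PiM UNIV Tm)" and \<psi>: "\<psi> \<in> borel_measurable (PiM UNIV AM \<Otimes>\<^sub>M Fm i)"
  shows "(\<integral>z. \<psi> z \<partial>action_type_kernel AM (Fm i) f i t)
    = (\<integral>a. \<psi> (a, t i) \<partial>PiM UNIV (\<lambda>j. f j (t j)))"
  unfolding action_type_kernel_def by (rule integral_distr[OF measurable_Pair_type[OF t] \<psi>])

lemma emeasure_action_type_kernel_Times:
  assumes t: "t \<in> space (PiM UNIV Tm)" and B: "\<And>j. B j \<in> sets (AM j)" and F: "F \<in> sets (Fm i)"
  shows "emeasure (action_type_kernel AM (Fm i) f i t) (PiE UNIV B \<times> F)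
    = (\<Prod>j\<in>UNIV. indicator (if j = i then F else space (Tm j)) (t j) * emeasure (f j (t j)) (B j))"
proof -
  have "f j (t j) \<in> space (prob_algebra (AM j))" for j
    using measurable_space[OF f] t by (auto simp: space_PiM)
  then have sets_f: "sets (f j (t j)) = sets (AM j)" and prob_f: "prob_space (f j (t j))" for j
    by (auto simp: space_prob_algebra)
  interpret actions: product_prob_space "\<lambda>j. f j (t j)"
    by (rule product_prob_spaceI) (rule prob_f)
  have sets_actions: "sets (PiM UNIV (\<lambda>j. f j (t j))) = sets (PiM UNIV AM)"
    using sets_f by (intro sets_PiM_cong) auto
  have B_PiM: "PiE UNIV B \<in> sets (PiM UNIV AM)"
    using B by (auto intro: sets_PiM_I_finite)
  have "emeasure (action_type_kernel AM (Fm i) f i t) (PiE UNIV B \<times> F)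
      = indicator F (t i) * emeasure (PiM UNIV (\<lambda>j. f j (t j))) (PiE UNIV B)"
    unfolding action_type_kernel_def
    using B_PiM F sets.sets_into_space[OF B_PiM] sets_eq_imp_space_eq[OF sets_actions]
    by (subst emeasure_distr[OF measurable_Pair_type[OF t]]) (auto simp: Int_absorb2)
  also have "\<dots> = indicator F (t i) * (\<Prod>j\<in>UNIV. emeasure (f j (t j)) (B j))"
    using B sets_f by (subst actions.emeasure_PiM) auto
  also have "(indicator F (t i) :: ennreal) = (\<Prod>j\<in>UNIV. indicator (if j = i then F else space (Tm j)) (t j))"
    using t prod.remove[of UNIV i "\<lambda>j. indicator (if j = i then F else space (Tm j)) (t j) :: ennreal"]
    by (auto simp: indicator_def space_PiM PiE_iff)
  finally show ?thesis by (simp add: prod.distrib)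
qed

lemma sets_action_type_distr:
  "sets (action_type_distr Tm AM (Fm i) f i) = sets (PiM UNIV AM \<Otimes>\<^sub>M Fm i)"
  unfolding action_type_distr_def
  by (rule sets_bind_kernel[OF subprob_kernel_action_type_kernel space_PiM_types_nonempty])

lemma prob_space_action_type_distr: "prob_space (action_type_distr Tm AM (Fm i) f i)"
  unfolding action_type_distr_def
  by (rule prob_space_bind'[OF _ measurable_action_type_kernel])
     (simp add: space_prob_algebra prob_space_PiM T_prob)

lemma emeasure_action_type_distr_Times:
  assumes B: "\<And>j. B j \<in> sets (AM j)" and F: "F \<in> sets (Fm i)"
  shows "emeasure (action_type_distr Tm AM (Fm i) f i) (PiE UNIV B \<times> F)
    = (\<Prod>j\<in>UNIV. \<integral>\<^sup>+s. indicator (if j = i then F else space (Tm j)) s * emeasure (f j s) (B j) \<partial>Tm j)"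
proof -
  interpret product_prob_space Tm by (rule product_prob_spaceI) (rule T_prob)
  have "PiE UNIV B \<times> F \<in> sets (PiM UNIV AM \<Otimes>\<^sub>M Fm i)"
    using B F by (auto intro: sets_PiM_I_finite)
  then have "emeasure (action_type_distr Tm AM (Fm i) f i) (PiE UNIV B \<times> F)
     = \<integral>\<^sup>+t. emeasure (action_type_kernel AM (Fm i) f i t) (PiE UNIV B \<times> F) \<partial>PiM UNIV Tm"
    unfolding action_type_distr_def
    by (rule emeasure_bind[OF space_PiM_types_nonempty subprob_kernel_action_type_kernel])
  also have "\<dots> = \<integral>\<^sup>+t. (\<Prod>j\<in>UNIV. indicator (if j = i then F else space (Tm j)) (t j) * emeasure (f j (t j)) (B j))
      \<partial>PiM UNIV Tm"
    using B F by (intro nn_integral_cong emeasure_action_type_kernel_Times)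
  also have "\<dots> = (\<Prod>j\<in>UNIV. \<integral>\<^sup>+s. indicator (if j = i then F else space (Tm j)) s * emeasure (f j s) (B j) \<partial>Tm j)"
  proof (rule product_nn_integral_prod)
    fix j
    have "(if j = i then F else space (Tm j)) \<in> sets (Tm j)"
      using F F_sub[of i] by (auto simp: subalgebra_def)
    then show "(\<lambda>s. indicator (if j = i then F else space (Tm j)) s * emeasure (f j s) (B j)) \<in> borel_measurable (Tm j)"
      using measurable_emeasure_kernel[OF measurable_prob_algebraD[OF f] B] by measurable
  qed simp
  finally show ?thesis .
qed

lemma integral_action_type_distr:
  fixes \<psi> :: "('i \<Rightarrow> 'a) \<times> 't \<Rightarrow> real"
  assumes \<psi>: "integrable (action_type_distr Tm AM (Fm i) f i) \<psi>"
  shows "(\<integral>z. \<psi> z \<partial>action_type_distr Tm AM (Fm i) f i)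
    = (\<integral>t. \<integral>a. \<psi> (a, t i) \<partial>PiM UNIV (\<lambda>j. f j (t j)) \<partial>PiM UNIV Tm)"
proof -
  have "\<psi> \<in> borel_measurable (PiM UNIV AM \<Otimes>\<^sub>M Fm i)"
    using borel_measurable_integrable[OF \<psi>] by (simp cong: measurable_cong_sets[OF sets_action_type_distr refl])
  with \<psi> show ?thesis
    unfolding action_type_distr_def
    by (simp add: integral_bind[OF subprob_kernel_action_type_kernel space_PiM_types_nonempty]
        integral_action_type_kernel cong: Bochner_Integration.integral_cong)
qed

lemma integrable_action_type_distr:
  fixes \<psi> :: "('i \<Rightarrow> 'a) \<times> 't \<Rightarrow> real"
  assumes \<psi>: "\<psi> \<in> borel_measurable (PiM UNIV AM \<Otimes>\<^sub>M Fm i)"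
    and h: "integrable (Tm i) h"
    and bound: "\<And>a s. a \<in> space (PiM UNIV AM) \<Longrightarrow> s \<in> space (Tm i) \<Longrightarrow> \<bar>\<psi> (a, s)\<bar> \<le> h s"
  shows "integrable (action_type_distr Tm AM (Fm i) f i) \<psi>"
  unfolding action_type_distr_def
proof (rule integrable_bind_bound[OF subprob_kernel_action_type_kernel space_PiM_types_nonempty \<psi>])
  show "integrable (PiM UNIV Tm) (\<lambda>t. h (t i))"
    using h distr_PiM_component[of UNIV Tm i] T_prob
    by (subst integrable_distr_eq[symmetric]) auto
next
  fix t assume t: "t \<in> space (PiM UNIV Tm)"
  have "PiM UNIV (\<lambda>j. f j (t j)) \<in> space (prob_algebra (PiM UNIV AM))"
    using measurable_space[OF measurable_PiM_prob_kernel[OF f] t] .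
  then have sets_actions: "sets (PiM UNIV (\<lambda>j. f j (t j))) = sets (PiM UNIV AM)"
    and "prob_space (PiM UNIV (\<lambda>j. f j (t j)))"
    by (auto simp: space_prob_algebra)
  then interpret actions: prob_space "PiM UNIV (\<lambda>j. f j (t j))" by simp
  have "t i \<in> space (Tm i)" using t by (auto simp: space_PiM)
  then have "(\<integral>\<^sup>+a. norm (\<psi> (a, t i)) \<partial>PiM UNIV (\<lambda>j. f j (t j)))
      \<le> (\<integral>\<^sup>+a. ennreal (h (t i)) \<partial>PiM UNIV (\<lambda>j. f j (t j)))"
    using bound sets_eq_imp_space_eq[OF sets_actions] by (intro nn_integral_mono ennreal_leI) auto
  then show "(\<integral>\<^sup>+z. norm (\<psi> z) \<partial>action_type_kernel AM (Fm i) f i t) \<le> ennreal (h (t i))"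
    using \<psi> by (simp add: nn_integral_action_type_kernel[OF t] actions.emeasure_space_1)
qed

lemma payoff_PiM_eq_integral_action_type_distr:
  fixes u :: "'i \<Rightarrow> ('i \<Rightarrow> 'a) \<Rightarrow> 't \<Rightarrow> real"
  assumes int: "integrable (action_type_distr Tm AM (Fm i) f i) (\<lambda>(a, s). indicator E s * u i a s)"
  shows "payoff (PiM UNIV Tm) u f i E
    = (\<integral>(a, s). indicator E s * u i a s \<partial>action_type_distr Tm AM (Fm i) f i)"
  unfolding integral_action_type_distr[OF int] payoff_def set_lebesgue_integral_def
  by (intro Bochner_Integration.integral_cong) (auto split: split_indicator)

end

lemma action_type_distr_eqI:
  assumes f: "\<And>j. f j \<in> Tm j \<rightarrow>\<^sub>M prob_algebra (AM j)"
    and g: "\<And>j. g j \<in> Tm j \<rightarrow>\<^sub>M prob_algebra (AM j)"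
    and equiv: "univ_dist_equiv Tm Fm AM f g"
  shows "action_type_distr Tm AM (Fm i) f i = action_type_distr Tm AM (Fm i) g i"
proof (rule measure_eqI_PiM_pair[OF sets_action_type_distr[OF f] sets_action_type_distr[OF g]])
  show "finite_measure (action_type_distr Tm AM (Fm i) f i)"
    using prob_space_action_type_distr[OF f] by (rule prob_space.axioms)
next
  fix X F assume X: "X \<in> prod_algebra UNIV AM" and F: "F \<in> sets (Fm i)"
  obtain B where X_eq: "X = PiE UNIV B" and "B \<in> (\<Pi> j\<in>UNIV. sets (AM j))"
    using X by (rule prod_algebraE_all)
  then have B: "B j \<in> sets (AM j)" for j by auto
  have "(if j = i then F else space (Tm j)) \<in> sets (Fm j)" for j
    using F F_sub[of j] sets.top[of "Fm j"] by (auto simp: subalgebra_def)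
  with equiv B show "emeasure (action_type_distr Tm AM (Fm i) f i) (X \<times> F)
      = emeasure (action_type_distr Tm AM (Fm i) g i) (X \<times> F)"
    unfolding X_eq emeasure_action_type_distr_Times[OF f B F] emeasure_action_type_distr_Times[OF g B F]
      univ_dist_equiv_def by (intro prod.cong) auto
qed

end

theorem proposition1:
  fixes A :: "'i::finite \<Rightarrow> 'a::metric_space set"
    and Tm Fm :: "'i \<Rightarrow> 't measure"
    and lam :: "('i \<Rightarrow> 't) measure"
    and u :: "'i \<Rightarrow> ('i \<Rightarrow> 'a) \<Rightarrow> 't \<Rightarrow> real"
    and h :: "'i \<Rightarrow> 't \<Rightarrow> real"
    and f g :: "'i \<Rightarrow> 't \<Rightarrow> 'a measure"
  assumes A_compact: "\<And>i. compact (A i)"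
    and T_prob: "\<And>i. prob_space (Tm i)"
    and T_atomless: "\<And>i. atomless (Tm i)"
    and T_complete: "\<And>i. complete_measure (Tm i)"
    and lam_prob: "prob_space lam"
    and lam_sets: "sets lam = sets (PiM UNIV Tm)"
    and lam_marg: "\<And>i. distr lam (Tm i) (\<lambda>t. t i) = Tm i"
    and F_sub: "\<And>i. subalgebra (Tm i) (Fm i)"
    \<comment> \<open>Assumption (I)\<close>
    and indep: "lam = PiM UNIV Tm"
    \<comment> \<open>Assumption (P')\<close>
    and F_cg: "\<And>i. countably_generated (Fm i)"
    and u_meas: "\<And>i. (\<lambda>(a, t). u i a t) \<in>
                    borel_measurable (PiM UNIV (\<lambda>j. act_space (A j)) \<Otimes>\<^sub>M Fm i)"
    and u_cont: "\<And>i t. t \<in> space (Tm i) \<Longrightarrow> continuous_on (Pi UNIV A) (\<lambda>a. u i a t)"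
    and h_meas: "\<And>i. h i \<in> borel_measurable (Fm i)"
    and h_int: "\<And>i. integrable (Tm i) (h i)"
    and u_bound: "\<And>i a t. a \<in> Pi UNIV A \<Longrightarrow> t \<in> space (Tm i) \<Longrightarrow> \<bar>u i a t\<bar> \<le> h i t"
    \<comment> \<open>mixed strategies\<close>
    and f_strat: "\<And>i. f i \<in> Tm i \<rightarrow>\<^sub>M prob_algebra (act_space (A i))"
    and g_strat: "\<And>i. g i \<in> Tm i \<rightarrow>\<^sub>M prob_algebra (act_space (A i))"
    and equiv: "univ_dist_equiv Tm Fm (\<lambda>i. act_space (A i)) f g"
  shows "\<forall>i. \<forall>E\<in>sets (Fm i). payoff lam u f i E = payoff lam u g i E"
proof (intro allI ballI)
  fix i E assume E: "E \<in> sets (Fm i)"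
  let ?AM = "\<lambda>j. act_space (A j)"
  let ?\<psi> = "\<lambda>(a, s). indicator E s * u i a s"
  have \<psi>_meas: "?\<psi> \<in> borel_measurable (PiM UNIV ?AM \<Otimes>\<^sub>M Fm i)"
    using u_meas[of i] E by measurable
  have \<psi>_bound: "\<bar>?\<psi> (a, s)\<bar> \<le> h i s" if "a \<in> space (PiM UNIV ?AM)" "s \<in> space (Tm i)" for a s
    using u_bound[OF _ that(2), of a] that(1)
    by (auto simp: space_PiM act_space_def space_restrict_space PiE_UNIV_domain indicator_def)
  have law_eq: "action_type_distr Tm ?AM (Fm i) f i = action_type_distr Tm ?AM (Fm i) g i"
    by (rule action_type_distr_eqI[OF T_prob F_sub f_strat g_strat equiv])
  have int_f: "integrable (action_type_distr Tm ?AM (Fm i) f i) ?\<psi>"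
    by (rule integrable_action_type_distr[OF T_prob F_sub f_strat \<psi>_meas h_int \<psi>_bound])
  then have int_g: "integrable (action_type_distr Tm ?AM (Fm i) g i) ?\<psi>"
    by (simp only: law_eq)
  show "payoff lam u f i E = payoff lam u g i E"
    using payoff_PiM_eq_integral_action_type_distr[OF T_prob F_sub f_strat, where u = u, OF int_f]
      payoff_PiM_eq_integral_action_type_distr[OF T_prob F_sub g_strat, where u = u, OF int_g]
    by (simp only: indep law_eq)
qed

end
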